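(* Let $q=2v+1$ be a prime power where $v=k_1k_2\cdots k_r$ with $k_1,\dots,k_r$ pairwise coprime odd integers, each $k_i\ge 3$. Then there exists a $(v,\{k_1,\dots,k_r\})$ Heffter space over the additive group of $\mathbb F_q$.
   Context: A half-set of an abelian group $G$ of odd order $2v+1\ge7$ is a subset $V\subseteq G\setminus\{0\}$ containing exactly one element of each pair $\{g,-g\}$, $g\ne0$. A $(v,k)$ Heffter system on $V$ is a partition of $V$ into blocks of size $k$, each summing to $0$ in $G$. A $(v,\{k_1,\dots,k_r\})$ Heffter space over $G$ is a partial linear space (any two distinct points lie in at most one block) with point set a half-set $V$ of $G$, together with a resolution of its blocks into $r$ parallel classes $\mathcal P_1,\dots,\mathcal P_r$ (each a partition of $V$), where $\mathcal P_i$ is a $(v,k_i)$ Heffter system. *)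

theory Defs
  imports Main "HOL-Library.Disjoint_Sets" "HOL-Computational_Algebra.Primes"
begin

definition half_set :: "('a::ab_group_add) set \<Rightarrow> bool" where
  "half_set V \<longleftrightarrow> 0 \<notin> V \<and> (\<forall>g. g \<noteq> 0 \<longrightarrow> (g \<in> V \<longleftrightarrow> - g \<notin> V))"

definition heffter_system :: "('a::ab_group_add) set \<Rightarrow> nat \<Rightarrow> 'a set set \<Rightarrow> bool" where
  "heffter_system V k P \<longleftrightarrow> partition_on V P \<and> (\<forall>B\<in>P. card B = k \<and> \<Sum>B = 0)"

definition heffter_space :: "('a::ab_group_add) set \<Rightarrow> nat list \<Rightarrow> (nat \<Rightarrow> 'a set set) \<Rightarrow> bool" where
  "heffter_space V ks P \<longleftrightarrow>
     half_set V \<and>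
     (\<forall>i < length ks. heffter_system V (ks ! i) (P i)) \<and>
     (\<forall>x y. x \<noteq> y \<longrightarrow>
        (\<forall>B1 \<in> (\<Union>i<length ks. P i). \<forall>B2 \<in> (\<Union>i<length ks. P i).
           x \<in> B1 \<and> y \<in> B1 \<and> x \<in> B2 \<and> y \<in> B2 \<longrightarrow> B1 = B2))"

end

(*
  The multiplicative group of the field 'a of order q = 2v + 1 is cyclic of order 2v.  The point
  set is the group V of v-th roots of unity (the nonzero squares); since v is odd and -1 is not 1,
  exactly one of x, -x lies in V.  For k dividing v, the parallel class of k consists of the fibres
  of x \<mapsto> x^k on V, i.e. the cosets x \<mu>_k of the group \<mu>_k of k-th roots of unity.  Because
  k divides q - 1, \<mu>_k has exactly k elements, and a coset sums to x \<Sigma>\<mu>_k = 0, since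
  multiplication by any \<zeta> \<noteq> 1 in \<mu>_k fixes \<Sigma>\<mu>_k.  Distinct x, y in a common block of the
  classes of coprime k_i, k_j would satisfy x^k_i = y^k_i and x^k_j = y^k_j, forcing x = y by
  Bezout.
*)
theory Submission
  (* Imported before Defs so that prime in the statement denotes the number-theoretic
     predicate and not HOL-Algebra's Divisibility.prime. *)
  imports "HOL-Library.Cardinality" "HOL-Algebra.Algebraic_Closure_Type" Defs
begin

lemma finite_field_primitive_element:
  "\<exists>g::'a::{finite,field}.
     (\<forall>x. x \<noteq> 0 \<longrightarrow> (\<exists>i. x = g ^ i)) \<and> (\<forall>i. g ^ i = 1 \<longleftrightarrow> CARD('a) - 1 dvd i)"
proof -
  let ?F = "ring_of_type_algebra :: 'a ring"
  \<comment> \<open>qualified, because Ring_Divisibility defines a different mult_of\<close>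
  let ?G = "Multiplicative_Group.mult_of ?F"
  interpret F: field ?F by rule
  interpret G: group ?G by (rule F.field_mult_group)
  have pow: "([^]\<^bsub>?G\<^esub>) x = (\<lambda>n::nat. x ^ n)" for x
  proof
    show "x [^]\<^bsub>?G\<^esub> n = x ^ n" for n :: nat
      unfolding Multiplicative_Group.nat_pow_mult_of
      by (induction n) (simp_all add: ring_of_type_algebra_def mult.commute)
  qed
  have carrier: "carrier ?G = - {0}"
    by (auto simp: ring_of_type_algebra_def)
  obtain g where g: "g \<in> carrier ?G" and "carrier ?G = {g [^]\<^bsub>?G\<^esub> i | i::nat. i \<in> UNIV}"
    using F.finite_field_mult_group_has_gen unfolding Multiplicative_Group.nat_pow_mult_of
    by (auto simp: ring_of_type_algebra_def)
  then have gen: "carrier ?G = range (\<lambda>i::nat. g ^ i)"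
    unfolding pow by (simp add: full_SetCompr_eq)
  have "G.ord g = card (generate ?G {g})"
    using g by (rule G.generate_pow_card)
  also have "generate ?G {g} = carrier ?G"
    using G.generate_pow_on_finite_carrier[OF _ g] gen by (auto simp: carrier pow)
  also have "card (carrier ?G) = CARD('a) - 1"
    unfolding carrier by (simp add: Compl_eq_Diff_UNIV card_Diff_singleton)
  finally have "G.ord g = CARD('a) - 1" .
  then have "g ^ i = 1 \<longleftrightarrow> CARD('a) - 1 dvd i" for i
    using G.pow_eq_id[OF g, of i] unfolding pow
    by (simp add: Multiplicative_Group.mult_of_def ring_of_type_algebra_def)
  moreover have "\<exists>i. x = g ^ i" if "x \<noteq> 0" for x
    using that gen carrier by auto
  ultimately show ?thesis by blast
qed

lemma power_card_minus_one_eq_one: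
  fixes x :: "'a::{finite,field}"
  assumes "x \<noteq> 0"
  shows "x ^ (CARD('a) - 1) = 1"
proof -
  obtain g :: 'a where gen: "\<And>x. x \<noteq> 0 \<Longrightarrow> \<exists>i. x = g ^ i"
    and ord: "\<And>i. g ^ i = 1 \<longleftrightarrow> CARD('a) - 1 dvd i"
    using finite_field_primitive_element by blast
  obtain i where "x = g ^ i" using gen assms by blast
  then show ?thesis using ord[of "i * (CARD('a) - 1)"] by (simp add: power_mult)
qed

lemma power_eq_power_iff_mod_order:
  fixes g :: "'a::idom"
  assumes "n > 0" and ord: "\<And>i. g ^ i = 1 \<longleftrightarrow> n dvd i"
  shows "g ^ i = g ^ j \<longleftrightarrow> i mod n = j mod n"
proof -
  have "g \<noteq> 0" using ord[of n] \<open>n > 0\<close> by (auto simp: power_0_left)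
  have le: "g ^ i = g ^ j \<longleftrightarrow> i mod n = j mod n" if "i \<le> j" for i j
  proof -
    have "g ^ j = g ^ i * g ^ (j - i)"
      using that by (simp flip: power_add)
    then have "g ^ i = g ^ j \<longleftrightarrow> n dvd j - i"
      using \<open>g \<noteq> 0\<close> ord[of "j - i"] by simp
    then show ?thesis using mod_eq_dvd_iff_nat[OF that, of n] by (simp add: eq_commute)
  qed
  show ?thesis
    using le[of i j] le[of j i] by (cases "i \<le> j") (auto simp: eq_commute)
qed

lemma card_roots_of_unity_finite_field:
  assumes "k dvd CARD('a::{finite,field}) - 1"
  shows "card {z::'a. z ^ k = 1} = k"
proof -
  define n where "n = CARD('a) - 1"
  obtain g :: 'a where gen: "\<And>x. x \<noteq> 0 \<Longrightarrow> \<exists>i. x = g ^ i"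
    and ord: "\<And>i. g ^ i = 1 \<longleftrightarrow> n dvd i"
    unfolding n_def using finite_field_primitive_element by blast
  obtain m where m: "n = m * k" using assms unfolding n_def by (metis dvd_def mult.commute)
  have "n > 0"
    using card_mono[of UNIV "{0::'a, 1}"] unfolding n_def by simp
  then have "k > 0" "m > 0" using m by auto
  note pow_eq = power_eq_power_iff_mod_order[OF \<open>n > 0\<close> ord]
  have "inj_on (\<lambda>t. g ^ (m * t)) {..<k}"
    using \<open>m > 0\<close> by (auto simp: inj_on_def pow_eq m mod_mult_mult1)
  moreover have "{z. z ^ k = 1} = (\<lambda>t. g ^ (m * t)) ` {..<k}"
  proof (intro equalityI subsetI)
    fix z :: 'a assume "z \<in> {z. z ^ k = 1}"
    then have "z ^ k = 1" by simp
    then have "z \<noteq> 0" using \<open>k > 0\<close> by (auto simp: power_0_left)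
    then obtain i where i: "z = g ^ i" using gen by blast
    then have "g ^ (i * k) = 1" using \<open>z ^ k = 1\<close> by (simp add: power_mult)
    then have "m * k dvd i * k" using ord m by simp
    then obtain s where s: "i = m * s" using \<open>k > 0\<close> by (auto elim: dvdE)
    have "z = g ^ (m * (s mod k))"
      unfolding i s pow_eq m by (simp add: mod_mult_mult1)
    then show "z \<in> (\<lambda>t. g ^ (m * t)) ` {..<k}" using \<open>k > 0\<close> by auto
  next
    fix z assume "z \<in> (\<lambda>t. g ^ (m * t)) ` {..<k}"
    then obtain t where "z = g ^ (m * t)" by blast
    then have "z ^ k = g ^ (n * t)" unfolding m by (simp add: mult_ac flip: power_mult)
    then show "z \<in> {z. z ^ k = 1}" using ord by simp
  qed
  ultimately show ?thesis by (simp add: card_image)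
qed

lemma sum_roots_of_unity_eq_0:
  fixes \<zeta> :: "'a::idom"
  assumes "finite {z::'a. z ^ k = 1}" and "k > 0" and "\<zeta> ^ k = 1" and "\<zeta> \<noteq> 1"
  shows "\<Sum>{z::'a. z ^ k = 1} = 0"
proof -
  let ?U = "{z::'a. z ^ k = 1}"
  have "\<zeta> \<noteq> 0" using assms(2,3) by (auto simp: power_0_left)
  then have inj: "inj_on (\<lambda>z. \<zeta> * z) ?U" by (simp add: inj_on_def)
  have "\<zeta> * \<Sum>?U = (\<Sum>z\<in>?U. \<zeta> * z)" by (simp add: sum_distrib_left)
  also have "\<dots> = \<Sum>((\<lambda>z. \<zeta> * z) ` ?U)" using inj by (simp add: sum.reindex)
  also have "(\<lambda>z. \<zeta> * z) ` ?U = ?U"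
    using assms(1,3) inj by (intro endo_inj_surj) (auto simp: power_mult_distrib)
  finally have "(\<zeta> - 1) * \<Sum>?U = 0" by (simp add: algebra_simps)
  then show ?thesis using assms(4) by simp
qed

lemma power_fibre_eq_mult_roots_of_unity:
  fixes x :: "'a::field"
  assumes "x \<noteq> 0"
  shows "{y. y ^ k = x ^ k} = (\<lambda>z. x * z) ` {z. z ^ k = 1}"
proof (intro equalityI subsetI)
  fix y assume "y \<in> {y. y ^ k = x ^ k}"
  then have "y = x * (y / x)" "(y / x) ^ k = 1"
    using assms by (simp_all add: power_divide)
  then show "y \<in> (\<lambda>z. x * z) ` {z. z ^ k = 1}" by blast
qed (auto simp: power_mult_distrib)

lemma eq_if_powers_eq_coprime:
  fixes x y :: "'a::idom"
  assumes "coprime a b" and "x ^ a = y ^ a" and "x ^ b = y ^ b"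
  shows "x = y"
proof (cases "a = 0")
  case True
  then show ?thesis using assms by simp
next
  case False
  then obtain s t where st: "a * s = b * t + 1"
    using bezout_nat[OF False, of b] assms(1) by auto
  have "x ^ (a * s) = y ^ (a * s)"
    using assms(2) by (simp add: power_mult)
  then have "x ^ (b * t) * x = y ^ (b * t) * y"
    by (simp add: st mult.commute)
  moreover have "x ^ (b * t) = y ^ (b * t)"
    using assms(3) by (simp add: power_mult)
  ultimately show ?thesis
    by (cases "x = 0") (auto simp: power_0_left split: if_splits)
qed

lemma one_neq_minus_one_finite_field:
  assumes "odd CARD('a::{finite,field})"
  shows "(1::'a) \<noteq> -1"
proof
  assume "(1::'a) = -1"
  then have "{z::'a. z ^ 2 = 1} \<subseteq> {1}"
    by (auto simp: power2_eq_1_iff)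
  then have "card {z::'a. z ^ 2 = 1} \<le> 1"
    using card_mono[of "{1::'a}"] by fastforce
  moreover have "card {z::'a. z ^ 2 = 1} = 2"
    using assms by (intro card_roots_of_unity_finite_field) (simp add: odd_pos)
  ultimately show False by simp
qed

definition power_fibres :: "'a::monoid_mult set \<Rightarrow> nat \<Rightarrow> 'a set set" where
  "power_fibres V k = (\<lambda>x. {y \<in> V. y ^ k = x ^ k}) ` V"

lemma partition_on_fibres: "partition_on A ((\<lambda>x. {y \<in> A. f y = f x}) ` A)"
  by (auto intro!: partition_onI simp: disjnt_def)

lemma power_fibres_eq_fibre:
  assumes "B \<in> power_fibres V k" and "x \<in> B"
  shows "B = {y \<in> V. y ^ k = x ^ k}"
  using assms by (auto simp: power_fibres_def)

lemma half_set_roots_of_unity: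
  assumes "odd v" and "(1::'a::field) \<noteq> -1" and "\<And>x::'a. x \<noteq> 0 \<Longrightarrow> x ^ (2 * v) = 1"
  shows "half_set {x::'a. x ^ v = 1}"
  unfolding half_set_def
proof (intro conjI allI impI)
  show "0 \<notin> {x::'a. x ^ v = 1}"
    using \<open>odd v\<close> by (auto simp: power_0_left odd_pos)
  fix x :: 'a assume "x \<noteq> 0"
  have "(x ^ v)\<^sup>2 = x ^ (2 * v)"
    by (simp only: mult.commute[of 2 v] power_mult)
  then have "(x ^ v)\<^sup>2 = 1"
    using assms(3) \<open>x \<noteq> 0\<close> by simp
  then have "x ^ v = 1 \<or> x ^ v = -1" by (simp add: power2_eq_1_iff)
  moreover have "(- x) ^ v = - (x ^ v)"
    using \<open>odd v\<close> by (simp add: power_minus_odd)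
  ultimately show "x \<in> {x. x ^ v = 1} \<longleftrightarrow> - x \<notin> {x. x ^ v = 1}"
    using assms(2) by auto
qed

lemma heffter_system_power_fibres:
  assumes "v > 0" and "k dvd v" and "card {z::'a::field. z ^ k = 1} = k" and "k \<ge> 2"
  shows "heffter_system {x::'a. x ^ v = 1} k (power_fibres {x. x ^ v = 1} k)"
proof -
  let ?V = "{x::'a. x ^ v = 1}" and ?U = "{z::'a. z ^ k = 1}"
  obtain w where w: "v = k * w" using assms(2) by blast
  have block: "{y \<in> ?V. y ^ k = x ^ k} = (\<lambda>z. x * z) ` ?U" if "x \<in> ?V" for x
  proof -
    have "x \<noteq> 0" using that \<open>v > 0\<close> by (auto simp: power_0_left)
    have "y ^ v = 1" if "y ^ k = x ^ k" for y
      using that \<open>x \<in> ?V\<close> unfolding w by (simp add: power_mult)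
    then have "{y \<in> ?V. y ^ k = x ^ k} = {y. y ^ k = x ^ k}" by auto
    also have "\<dots> = (\<lambda>z. x * z) ` ?U"
      using \<open>x \<noteq> 0\<close> by (rule power_fibre_eq_mult_roots_of_unity)
    finally show ?thesis .
  qed
  have "finite ?U" using assms(3,4) card.infinite by force
  have "\<not> ?U \<subseteq> {1}"
    using assms(3,4) card_mono[of "{1::'a}" ?U] by auto
  then obtain \<zeta> :: 'a where "\<zeta> ^ k = 1" "\<zeta> \<noteq> 1" by blast
  then have sum_U: "\<Sum>?U = 0"
    using \<open>finite ?U\<close> assms(4) by (intro sum_roots_of_unity_eq_0) auto
  have "card B = k \<and> \<Sum>B = 0" if B_fibre: "B \<in> power_fibres ?V k" for B
  proof -
    obtain x where x: "x \<in> ?V" and B: "B = (\<lambda>z. x * z) ` ?U"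
      using B_fibre block unfolding power_fibres_def by blast
    then have "x \<noteq> 0" using \<open>v > 0\<close> by (auto simp: power_0_left)
    then have inj: "inj_on (\<lambda>z. x * z) ?U" by (simp add: inj_on_def)
    then have "card B = card ?U" unfolding B by (rule card_image)
    moreover have "\<Sum>B = x * \<Sum>?U"
      unfolding B using inj by (simp add: sum.reindex sum_distrib_left)
    ultimately show ?thesis using assms(3) sum_U by simp
  qed
  moreover have "partition_on ?V (power_fibres ?V k)"
    unfolding power_fibres_def by (rule partition_on_fibres)
  ultimately show ?thesis
    unfolding heffter_system_def by blast
qed

lemma heffter_space_power_fibres:
  fixes V :: "'a::idom set"
  assumes "half_set V"
    and "\<forall>i < length ks. heffter_system V (ks ! i) (power_fibres V (ks ! i))"
    and "\<forall>i < length ks. \<forall>j < length ks. i \<noteq> j \<longrightarrow> coprime (ks ! i) (ks ! j)"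
  shows "heffter_space V ks (\<lambda>i. power_fibres V (ks ! i))"
proof -
  have "B1 = B2"
    if "x \<noteq> y" and B1: "B1 \<in> (\<Union>i<length ks. power_fibres V (ks ! i))"
      and B2: "B2 \<in> (\<Union>i<length ks. power_fibres V (ks ! i))"
      and xy: "x \<in> B1" "y \<in> B1" "x \<in> B2" "y \<in> B2"
    for x y B1 B2
  proof -
    obtain i where i: "i < length ks" "B1 \<in> power_fibres V (ks ! i)" using B1 by blast
    obtain j where j: "j < length ks" "B2 \<in> power_fibres V (ks ! j)" using B2 by blast
    have B1_eq: "B1 = {z \<in> V. z ^ (ks ! i) = x ^ (ks ! i)}"
      using i(2) xy(1) by (rule power_fibres_eq_fibre)
    have B2_eq: "B2 = {z \<in> V. z ^ (ks ! j) = x ^ (ks ! j)}"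
      using j(2) xy(3) by (rule power_fibres_eq_fibre)
    show "B1 = B2"
    proof (cases "i = j")
      case False
      then have "coprime (ks ! i) (ks ! j)" using assms(3) i(1) j(1) by blast
      moreover have "y ^ (ks ! i) = x ^ (ks ! i)" "y ^ (ks ! j) = x ^ (ks ! j)"
        using xy unfolding B1_eq B2_eq by auto
      ultimately have "y = x" by (rule eq_if_powers_eq_coprime)
      then show ?thesis using \<open>x \<noteq> y\<close> by simp
    qed (simp add: B1_eq B2_eq)
  qed
  then show ?thesis
    unfolding heffter_space_def using assms(1,2) by blast
qed

theorem theorem3p2:
  fixes ks :: "nat list"
  assumes "ks \<noteq> []"
    and "\<forall>k \<in> set ks. odd k \<and> k \<ge> 3"
    and "\<forall>i < length ks. \<forall>j < length ks. i \<noteq> j \<longrightarrow> coprime (ks ! i) (ks ! j)"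
    and "\<exists>p n. prime (p::nat) \<and> n > 0 \<and> 2 * prod_list ks + 1 = p ^ n"
    and "card (UNIV :: ('a::{finite, field}) set) = 2 * prod_list ks + 1"
  shows "\<exists>(V :: 'a set) P. heffter_space V ks P"
proof -
  define v where "v = prod_list ks"
  have card: "CARD('a) - 1 = 2 * v" using assms(5) unfolding v_def by simp
  have "odd v" unfolding v_def using assms(2) by (induction ks) auto
  then have "v > 0" by (simp add: odd_pos)
  have "half_set {x::'a. x ^ v = 1}"
  proof (rule half_set_roots_of_unity)
    show "(1::'a) \<noteq> -1" using assms(5) by (intro one_neq_minus_one_finite_field) simp
    show "x ^ (2 * v) = 1" if "x \<noteq> 0" for x :: 'a
      using power_card_minus_one_eq_one[OF that] card by simp
  qed (rule \<open>odd v\<close>)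
  moreover have "heffter_system {x::'a. x ^ v = 1} (ks ! i) (power_fibres {x. x ^ v = 1} (ks ! i))"
    if "i < length ks" for i
  proof (rule heffter_system_power_fibres)
    have "ks ! i dvd v" unfolding v_def using that by (simp add: prod_list_dvd)
    then show "ks ! i dvd v" "card {z::'a. z ^ (ks ! i) = 1} = ks ! i"
      using card by (auto intro: card_roots_of_unity_finite_field)
    show "ks ! i \<ge> 2" using assms(2) that nth_mem by fastforce
  qed fact
  ultimately have "heffter_space {x::'a. x ^ v = 1} ks (\<lambda>i. power_fibres {x. x ^ v = 1} (ks ! i))"
    using assms(3) by (intro heffter_space_power_fibres) auto
  then show ?thesis by blast
qed
end
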